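(* For a topological space $X$ the following are equivalent: (1) $X$ is strongly star Hurewicz; (2) for every nonempty $A\subseteq X$ and every sequence $(\mathcal U_n:n\in\omega)$ of families of open subsets of $X$ with $\overline A\subseteq\bigcup\mathcal U_n$ for every $n$, there is a sequence $(F_n:n\in\omega)$ of finite subsets of $X$ such that every $x\in A$ belongs to $st(F_n,\mathcal U_n)$ for all but finitely many $n\in\omega$.
   Context: For a family $\mathcal U$ of subsets of $X$ and $A\subseteq X$, $st(A,\mathcal U)=\bigcup\{U\in\mathcal U: U\cap A\neq\emptyset\}$. $X$ is strongly star Hurewicz if for every sequence $(\mathcal U_n:n\in\omega)$ of open covers of $X$ there are finite $F_n\subseteq X$ such that every $x\in X$ belongs to $st(F_n,\mathcal U_n)$ for all but finitely many $n$. *)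

theory Defs
  imports "HOL-Analysis.Analysis"
begin

definition st :: "'a set \<Rightarrow> 'a set set \<Rightarrow> 'a set" where
  "st A U = \<Union>{V \<in> U. V \<inter> A \<noteq> {}}"

definition strongly_star_Hurewicz :: "'a topology \<Rightarrow> bool" where
  "strongly_star_Hurewicz X \<longleftrightarrow>
     (\<forall>U :: nat \<Rightarrow> 'a set set.
        (\<forall>n. (\<forall>V\<in>U n. openin X V) \<and> topspace X \<subseteq> \<Union>(U n)) \<longrightarrow>
        (\<exists>F :: nat \<Rightarrow> 'a set. (\<forall>n. finite (F n) \<and> F n \<subseteq> topspace X) \<and>
           (\<forall>x\<in>topspace X. \<forall>\<^sub>F n in sequentially. x \<in> st (F n) (U n))))"

end

theory Submission
  imports Defs
begin

(* For (1) => (2), add the open set topspace X - closure A to every U n: the enlarged families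
   cover X, and the added member never meets the closure of A, so it contributes nothing to the
   stars at points of A.  For (2) => (1), take A = topspace X. *)

lemma st_insert: "st A (insert W U) = (if W \<inter> A = {} then st A U else W \<union> st A U)"
  unfolding st_def by auto

lemma strongly_star_Hurewicz_closedin_cover:
  assumes "strongly_star_Hurewicz X" and "closedin X C"
    and U: "\<forall>n. (\<forall>V\<in>U n. openin X V) \<and> C \<subseteq> \<Union>(U n)"
  shows "\<exists>F. (\<forall>n. finite (F n) \<and> F n \<subseteq> topspace X) \<and>
           (\<forall>x\<in>C. \<forall>\<^sub>F n in sequentially. x \<in> st (F n) (U n))"
proof -
  define W where "W n = insert (topspace X - C) (U n)" for n
  have "\<forall>n. (\<forall>V\<in>W n. openin X V) \<and> topspace X \<subseteq> \<Union>(W n)"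
    using U \<open>closedin X C\<close> by (auto simp: W_def openin_diff)
  from assms(1)[unfolded strongly_star_Hurewicz_def, THEN spec, of W, THEN mp, OF this]
  obtain F where F: "\<forall>n. finite (F n) \<and> F n \<subseteq> topspace X"
    and FW: "\<forall>x\<in>topspace X. \<forall>\<^sub>F n in sequentially. x \<in> st (F n) (W n)"
    by (elim exE conjE)
  have "\<forall>\<^sub>F n in sequentially. x \<in> st (F n) (U n)" if "x \<in> C" for x
  proof -
    have "x \<in> topspace X"
      using \<open>x \<in> C\<close> \<open>closedin X C\<close> closedin_subset by blast
    with FW have "\<forall>\<^sub>F n in sequentially. x \<in> st (F n) (W n)" ..
    then show ?thesis
      by (rule eventually_mono) (use \<open>x \<in> C\<close> in \<open>auto simp: W_def st_insert split: if_splits\<close>)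
  qed
  with F show ?thesis
    by blast
qed

theorem proposition4p1:
  fixes X :: "'a topology"
  shows "strongly_star_Hurewicz X \<longleftrightarrow>
    (\<forall>A U. A \<subseteq> topspace X \<and> A \<noteq> {} \<and>
        (\<forall>n::nat. (\<forall>V\<in>U n. openin X V) \<and> X closure_of A \<subseteq> \<Union>(U n)) \<longrightarrow>
        (\<exists>F :: nat \<Rightarrow> 'a set. (\<forall>n. finite (F n) \<and> F n \<subseteq> topspace X) \<and>
           (\<forall>x\<in>A. \<forall>\<^sub>F n in sequentially. x \<in> st (F n) (U n))))"
    (is "_ \<longleftrightarrow> ?relative")
proof
  assume "strongly_star_Hurewicz X"
  show ?relative
  proof (intro allI impI, elim conjE)
    fix A and U :: "nat \<Rightarrow> 'a set set"
    assume "A \<subseteq> topspace X" and "\<forall>n. (\<forall>V\<in>U n. openin X V) \<and> X closure_of A \<subseteq> \<Union>(U n)"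
    with strongly_star_Hurewicz_closedin_cover[OF \<open>strongly_star_Hurewicz X\<close> closedin_closure_of]
      closure_of_subset[OF \<open>A \<subseteq> topspace X\<close>]
    show "\<exists>F. (\<forall>n. finite (F n) \<and> F n \<subseteq> topspace X) \<and>
        (\<forall>x\<in>A. \<forall>\<^sub>F n in sequentially. x \<in> st (F n) (U n))"
      by (meson subsetD)
  qed
next
  assume ?relative
  show "strongly_star_Hurewicz X"
    unfolding strongly_star_Hurewicz_def
  proof (intro allI impI)
    fix U :: "nat \<Rightarrow> 'a set set"
    assume U: "\<forall>n. (\<forall>V\<in>U n. openin X V) \<and> topspace X \<subseteq> \<Union>(U n)"
    show "\<exists>F. (\<forall>n. finite (F n) \<and> F n \<subseteq> topspace X) \<and>
        (\<forall>x\<in>topspace X. \<forall>\<^sub>F n in sequentially. x \<in> st (F n) (U n))"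
    proof (cases "topspace X = {}")
      case True
      then show ?thesis
        by (intro exI[of _ "\<lambda>n. {}"]) auto
    next
      case False
      show ?thesis
        by (rule \<open>?relative\<close>[rule_format, of "topspace X" U]) (use False U in auto)
    qed
  qed
qed

end
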